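(* Let $V=W\times D$ be a direct product of finite-dimensional real vector spaces, let $\theta$ be the pullback to $V$ of a volume form in $W$ and $\zeta$ the pullback to $V$ of an indivisible exterior form in $D$. Then the divisibility space of the exterior $p$-form $\mu=\theta\wedge\zeta$ is $\{0\}\times D$.
   Context: A volume form in a vector space is a nonzero form of top degree (a nonzero scalar if the dimension is $0$). The divisibility space of an exterior form $\mu$ in $V$ is the common kernel of all $1$-forms $\xi\in V^*$ with $\xi\wedge\mu=0$ (for a nonzero $0$-form it is $V$). An exterior form in $D$ is indivisible if its divisibility space is all of $D$, i.e. $\xi\wedge\zeta\neq0$ for all nonzero $\xi\in D^*$. *)

theory Defs
  imports "HOL-Analysis.Analysis"
begin

text \<open>Exterior k-forms on a real vector space 'v, represented as functions on lists of
vectors: alternating multilinear in lists of length k, and 0 on lists of other length.\<close>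

definition alt_form :: "nat \<Rightarrow> ('v::real_vector list \<Rightarrow> real) \<Rightarrow> bool" where
  "alt_form k f \<longleftrightarrow>
     (\<forall>xs. length xs \<noteq> k \<longrightarrow> f xs = 0) \<and>
     (\<forall>xs i. length xs = k \<and> i < k \<longrightarrow> linear (\<lambda>v. f (xs[i := v]))) \<and>
     (\<forall>xs i j. length xs = k \<and> i < j \<and> j < k \<and> xs ! i = xs ! j \<longrightarrow> f xs = 0)"

definition wedge :: "nat \<Rightarrow> nat \<Rightarrow> ('v list \<Rightarrow> real) \<Rightarrow> ('v list \<Rightarrow> real) \<Rightarrow> ('v list \<Rightarrow> real)" where
  "wedge k l \<alpha> \<beta> = (\<lambda>xs. if length xs = k + l then
      (1 / (fact k * fact l)) *
      (\<Sum>\<sigma> \<in> {\<sigma>. \<sigma> permutes {0..<k+l}}.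
          of_int (sign \<sigma>) * \<alpha> (map (\<lambda>i. xs ! \<sigma> i) [0..<k])
                         * \<beta> (map (\<lambda>i. xs ! \<sigma> (k + i)) [0..<l]))
    else 0)"

definition one_form :: "('v \<Rightarrow> real) \<Rightarrow> ('v list \<Rightarrow> real)" where
  "one_form \<xi> = (\<lambda>xs. if length xs = 1 then \<xi> (hd xs) else 0)"

definition div_space :: "nat \<Rightarrow> ('v::real_vector list \<Rightarrow> real) \<Rightarrow> 'v set" where
  "div_space k \<mu> = {v. \<forall>\<xi>. linear \<xi> \<and> wedge 1 k (one_form \<xi>) \<mu> = (\<lambda>_. 0) \<longrightarrow> \<xi> v = 0}"

definition volume_form :: "nat \<Rightarrow> ('v::real_vector list \<Rightarrow> real) \<Rightarrow> bool" where
  "volume_form k f \<longleftrightarrow> k = dim (UNIV :: 'v set) \<and> alt_form k f \<and> f \<noteq> (\<lambda>_. 0)"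

definition indivisible :: "nat \<Rightarrow> ('v::real_vector list \<Rightarrow> real) \<Rightarrow> bool" where
  "indivisible k f \<longleftrightarrow> alt_form k f \<and> div_space k f = UNIV"

definition fin_dim_space :: "'v::real_vector itself \<Rightarrow> bool" where
  "fin_dim_space _ \<longleftrightarrow> (\<exists>B :: 'v set. finite B \<and> span B = UNIV)"

end

theory Submission
  imports Defs
begin

text \<open>
  Write \<open>\<mu> = \<theta> \<and> \<zeta>\<close> for the pulled-back forms. If \<open>v\<close> has a nonzero \<open>W\<close>-component, pick a
  functional \<open>\<alpha>\<close> on \<open>W\<close> with \<open>\<alpha> (fst v) = 1\<close>. Then \<open>(\<alpha> \<circ> fst) \<and> \<mu>\<close> is the alternation of a
  product whose first factor is the alternation of \<open>\<alpha> \<otimes> \<theta>\<close>, an \<open>(n + 1)\<close>-form on the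
  \<open>n\<close>-dimensional space \<open>W\<close>; so it vanishes and \<open>v\<close> is not in the divisibility space.

  Conversely, let \<open>\<xi> \<and> \<mu> = 0\<close>. Up to sign \<open>\<xi> \<and> \<mu>\<close> is \<open>\<xi> \<and> \<zeta> \<and> \<theta>\<close>; evaluate it on
  \<open>(0, d\<^sub>0), \<dots>, (0, d\<^sub>q), (w\<^sub>1, 0), \<dots>, (w\<^sub>n, 0)\<close> with \<open>\<theta> w \<noteq> 0\<close>. Since \<open>\<theta>\<close> kills every
  vector with zero \<open>W\<close>-component, only the permutations keeping the \<open>w\<^sub>i\<close> in the \<open>\<theta>\<close>-slots
  contribute, and the value is \<open>\<theta> w * (\<xi> (0, -) \<and> \<zeta>) d\<close>. Hence \<open>\<xi> (0, -) \<and> \<zeta> = 0\<close>, and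
  indivisibility of \<open>\<zeta>\<close> gives \<open>\<xi> (0, d) = 0\<close> for all \<open>d\<close>.
\<close>

subsection \<open>Permutations of lists and block permutations\<close>

lemma permutation_of_permutes_lessThan: "\<sigma> permutes {..<(n :: nat)} \<Longrightarrow> permutation \<sigma>"
  using permutes_imp_permutation[of "{..<n}" \<sigma>] by simp

lemma nth_permute_list [simp]: "i < length xs \<Longrightarrow> permute_list f xs ! i = xs ! f i"
  by (simp add: permute_list_def)

lemma take_permute_list:
  assumes "\<sigma> permutes {..<a}" "a \<le> length xs"
  shows "take a (permute_list \<sigma> xs) = permute_list \<sigma> (take a xs)"
  using assms permutes_in_image[OF assms(1)] by (intro nth_equalityI) auto

lemma drop_permute_list:
  assumes "\<sigma> permutes {..<a}" "a \<le> length xs"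
  shows "drop a (permute_list \<sigma> xs) = drop a xs"
proof (intro nth_equalityI)
  fix i assume "i < length (drop a (permute_list \<sigma> xs))"
  moreover have "\<sigma> (a + i) = a + i"
    using assms(1) by (rule permutes_not_in) simp
  ultimately show "drop a (permute_list \<sigma> xs) ! i = drop a xs ! i"
    using assms(2) by simp
qed simp

lemma permute_list_list_update:
  assumes "\<sigma> permutes {..<length xs}" "j < length xs"
  shows "permute_list \<sigma> (xs[j := v]) = (permute_list \<sigma> xs)[inv \<sigma> j := v]"
proof (intro nth_equalityI)
  fix k assume k: "k < length (permute_list \<sigma> (xs[j := v]))"
  then have "\<sigma> k < length xs"
    using permutes_in_image[OF assms(1)] by simp
  moreover have "inv \<sigma> j < length xs"
    using permutes_in_image[OF permutes_inv[OF assms(1)]] assms(2) by simp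
  moreover have "\<sigma> k = j \<longleftrightarrow> inv \<sigma> j = k"
    using permutes_inv_eq[OF assms(1)] by auto
  ultimately show "permute_list \<sigma> (xs[j := v]) ! k = (permute_list \<sigma> xs)[inv \<sigma> j := v] ! k"
    using k assms(2) by (cases "\<sigma> k = j") (simp_all add: nth_list_update)
qed simp

lemma permutes_lessThanI:
  fixes n :: nat
  assumes "\<And>i. i < n \<Longrightarrow> f i < n" "inj_on f {..<n}" "\<And>i. n \<le> i \<Longrightarrow> f i = i"
  shows "f permutes {..<n}"
proof (rule bij_imp_permutes)
  have "f ` {..<n} \<subseteq> {..<n}"
    using assms(1) by (simp add: image_subset_iff)
  then have "f ` {..<n} = {..<n}"
    using endo_inj_surj[of "{..<n}" f] assms(2) by simp
  then show "bij_betw f {..<n} {..<n}"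
    using assms(2) by (simp add: bij_betw_def)
  show "f i = i" if "i \<notin> {..<n}" for i
    using that by (simp add: assms(3))
qed

definition shift_perm :: "nat \<Rightarrow> (nat \<Rightarrow> nat) \<Rightarrow> nat \<Rightarrow> nat" where
  "shift_perm a \<sigma> i = (if i < a then i else a + \<sigma> (i - a))"

lemma shift_perm_permutes:
  assumes "\<sigma> permutes {..<b}"
  shows "shift_perm a \<sigma> permutes {..<a + b}"
proof (rule permutes_lessThanI)
  show "shift_perm a \<sigma> i < a + b" if "i < a + b" for i
  proof (cases "i < a")
    case False
    then have "\<sigma> (i - a) < b"
      using that permutes_in_image[OF assms, of "i - a"] by simp
    then show ?thesis by (simp add: shift_perm_def)
  qed (simp add: shift_perm_def)
  show "inj_on (shift_perm a \<sigma>) {..<a + b}"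
  proof (rule inj_onI)
    fix i j assume "shift_perm a \<sigma> i = shift_perm a \<sigma> j"
    moreover have "\<sigma> (i - a) = \<sigma> (j - a) \<Longrightarrow> i - a = j - a"
      using permutes_inj[OF assms] by (simp add: inj_eq)
    ultimately show "i = j"
      by (simp add: shift_perm_def split: if_splits)
  qed
  show "shift_perm a \<sigma> i = i" if "a + b \<le> i" for i
    using that permutes_not_in[OF assms, of "i - a"] by (simp add: shift_perm_def)
qed

lemma sign_shift_perm:
  assumes "\<sigma> permutes {..<b}"
  shows "sign (shift_perm a \<sigma>) = sign \<sigma>"
  using assms finite_lessThan
proof (induction rule: permutes_induct)
  case id
  have "shift_perm a id = id"
    by (rule ext) (simp add: shift_perm_def)
  then show ?case by (simp only:)
next
  case (swap x y p)
  have p: "permutation p" and sp: "permutation (shift_perm a p)"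
    using \<open>p permutes {..<b}\<close> shift_perm_permutes[OF \<open>p permutes {..<b}\<close>, of a]
    by (simp_all add: permutation_of_permutes_lessThan)
  have "shift_perm a (Transposition.transpose x y \<circ> p)
      = Transposition.transpose (a + x) (a + y) \<circ> shift_perm a p"
    by (rule ext) (auto simp: shift_perm_def Transposition.transpose_def)
  then have "sign (shift_perm a (Transposition.transpose x y \<circ> p)) = - sign (shift_perm a p)"
    using \<open>x \<noteq> y\<close> by (simp add: sign_compose[OF permutation_swap_id sp] sign_swap_id)
  also have "\<dots> = sign (Transposition.transpose x y \<circ> p)"
    using swap.IH \<open>x \<noteq> y\<close> by (simp add: sign_compose[OF permutation_swap_id p] sign_swap_id)
  finally show ?case .
qed

lemma take_permute_list_shift_perm:
  "a \<le> length xs \<Longrightarrow> take a (permute_list (shift_perm a \<sigma>) xs) = take a xs"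
  by (intro nth_equalityI) (auto simp: shift_perm_def)

lemma drop_permute_list_shift_perm:
  assumes "\<sigma> permutes {..<b}" "length xs = a + b"
  shows "drop a (permute_list (shift_perm a \<sigma>) xs) = permute_list \<sigma> (drop a xs)"
  using assms permutes_in_image[OF assms(1)] by (intro nth_equalityI) (auto simp: shift_perm_def)

definition block_perm :: "nat \<Rightarrow> (nat \<Rightarrow> nat) \<Rightarrow> (nat \<Rightarrow> nat) \<Rightarrow> nat \<Rightarrow> nat" where
  "block_perm a \<sigma> \<tau> = \<sigma> \<circ> shift_perm a \<tau>"

lemma block_perm_permutes:
  assumes "\<sigma> permutes {..<a}" "\<tau> permutes {..<b}"
  shows "block_perm a \<sigma> \<tau> permutes {..<a + b}"
  unfolding block_perm_def
  by (rule permutes_compose[OF shift_perm_permutes[OF assms(2)] permutes_subset[OF assms(1)]]) auto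

lemma sign_block_perm:
  assumes "\<sigma> permutes {..<a}" "\<tau> permutes {..<b}"
  shows "sign (block_perm a \<sigma> \<tau>) = sign \<sigma> * sign \<tau>"
proof -
  have "permutation \<sigma>" "permutation (shift_perm a \<tau>)"
    using assms(1) shift_perm_permutes[OF assms(2), of a] by (simp_all add: permutation_of_permutes_lessThan)
  then show ?thesis
    unfolding block_perm_def by (simp add: sign_compose sign_shift_perm[OF assms(2)])
qed

lemma permute_list_block_perm:
  assumes "\<sigma> permutes {..<a}" "\<tau> permutes {..<b}" "length xs = a + b"
  shows "take a (permute_list (block_perm a \<sigma> \<tau>) xs) = permute_list \<sigma> (take a xs)"
    and "drop a (permute_list (block_perm a \<sigma> \<tau>) xs) = permute_list \<tau> (drop a xs)"
proof -
  have "permute_list (block_perm a \<sigma> \<tau>) xs = permute_list (shift_perm a \<tau>) (permute_list \<sigma> xs)"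
    unfolding block_perm_def using shift_perm_permutes[OF assms(2), of a] assms(3)
    by (simp add: permute_list_compose)
  moreover have "a \<le> length xs"
    using assms(3) by simp
  ultimately show "take a (permute_list (block_perm a \<sigma> \<tau>) xs) = permute_list \<sigma> (take a xs)"
    and "drop a (permute_list (block_perm a \<sigma> \<tau>) xs) = permute_list \<tau> (drop a xs)"
    using assms take_permute_list[OF assms(1), of xs] drop_permute_list[OF assms(1), of xs]
    by (simp_all add: take_permute_list_shift_perm drop_permute_list_shift_perm)
qed

lemma inj_on_block_perm:
  "inj_on (case_prod (block_perm a)) ({\<sigma>. \<sigma> permutes {..<a}} \<times> {\<tau>. \<tau> permutes {..<b}})"
proof (rule inj_onI, clarsimp)
  fix \<sigma> \<tau> \<sigma>' \<tau>'
  assume \<sigma>: "\<sigma> permutes {..<a}" "\<sigma>' permutes {..<a}"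
    and \<tau>: "\<tau> permutes {..<b}" "\<tau>' permutes {..<b}"
    and eq: "block_perm a \<sigma> \<tau> = block_perm a \<sigma>' \<tau>'"
  have eq_at: "\<sigma> (shift_perm a \<tau> i) = \<sigma>' (shift_perm a \<tau>' i)" for i
    using fun_cong[OF eq, of i] by (simp add: block_perm_def)
  show "\<sigma> = \<sigma>' \<and> \<tau> = \<tau>'"
  proof
    show "\<sigma> = \<sigma>'"
    proof
      fix i show "\<sigma> i = \<sigma>' i"
        using eq_at[of i] permutes_not_in[OF \<sigma>(1), of i] permutes_not_in[OF \<sigma>(2), of i]
        by (cases "i < a") (simp_all add: shift_perm_def)
    qed
    show "\<tau> = \<tau>'"
    proof
      fix i show "\<tau> i = \<tau>' i"
      proof (cases "i < b")
        case True
        then have "\<tau> i < b" "\<tau>' i < b"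
          using permutes_in_image[OF \<tau>(1)] permutes_in_image[OF \<tau>(2)] by auto
        then show ?thesis
          using eq_at[of "a + i"] permutes_not_in[OF \<sigma>(1)] permutes_not_in[OF \<sigma>(2)]
          by (simp add: shift_perm_def)
      qed (use permutes_not_in[OF \<tau>(1), of i] permutes_not_in[OF \<tau>(2), of i] in simp)
    qed
  qed
qed

lemma permutes_lower_block:
  fixes a b :: nat
  assumes \<rho>: "\<rho> permutes {..<a + b}" and upper: "\<And>i. a \<le> i \<Longrightarrow> i < a + b \<Longrightarrow> a \<le> \<rho> i"
    and "i < a"
  shows "\<rho> i < a"
proof (rule ccontr)
  have inj: "inj_on \<rho> {..<a + b}"
    using permutes_inj_on[OF \<rho>] .
  have lt: "\<rho> j < a + b" if "j < a + b" for j
    using permutes_in_image[OF \<rho>] that by simp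
  have "\<rho> ` {a..<a + b} \<subseteq> {a..<a + b}"
    using upper lt by auto
  moreover have "inj_on \<rho> {a..<a + b}"
    using inj by (rule inj_on_subset) auto
  ultimately have image: "\<rho> ` {a..<a + b} = {a..<a + b}"
    using endo_inj_surj[of "{a..<a + b}" \<rho>] by simp
  assume "\<not> \<rho> i < a"
  then have "\<rho> i \<in> \<rho> ` {a..<a + b}"
    using image lt[of i] \<open>i < a\<close> by simp
  then obtain j where "j \<in> {a..<a + b}" "\<rho> i = \<rho> j"
    by blast
  then show False
    using inj_onD[OF inj, of i j] \<open>i < a\<close> by simp
qed

lemma block_perm_cases:
  assumes \<rho>: "\<rho> permutes {..<a + b}" and upper: "\<And>i. a \<le> i \<Longrightarrow> i < a + b \<Longrightarrow> a \<le> \<rho> i"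
  obtains \<sigma> \<tau> where "\<sigma> permutes {..<a}" "\<tau> permutes {..<b}" "\<rho> = block_perm a \<sigma> \<tau>"
proof -
  have inj: "inj_on \<rho> {..<a + b}"
    using permutes_inj_on[OF \<rho>] .
  have lt: "\<rho> i < a + b" if "i < a + b" for i
    using permutes_in_image[OF \<rho>] that by simp
  define \<sigma> where "\<sigma> i = (if i < a then \<rho> i else i)" for i
  define \<tau> where "\<tau> i = (if i < b then \<rho> (a + i) - a else i)" for i
  have "\<sigma> permutes {..<a}"
  proof (rule permutes_lessThanI)
    show "inj_on \<sigma> {..<a}"
      using inj by (auto simp: inj_on_def \<sigma>_def)
  qed (simp_all add: \<sigma>_def permutes_lower_block[OF \<rho> upper])
  moreover have "\<tau> permutes {..<b}"
  proof (rule permutes_lessThanI)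
    show "\<tau> i < b" if "i < b" for i
      using lt[of "a + i"] that by (simp add: \<tau>_def)
    show "inj_on \<tau> {..<b}"
    proof (rule inj_onI)
      fix i j assume "i \<in> {..<b}" "j \<in> {..<b}" "\<tau> i = \<tau> j"
      then have "\<rho> (a + i) = \<rho> (a + j)"
        using upper[of "a + i"] upper[of "a + j"] by (simp add: \<tau>_def)
      then show "i = j"
        using inj_onD[OF inj] \<open>i \<in> {..<b}\<close> \<open>j \<in> {..<b}\<close> by fastforce
    qed
  qed (simp add: \<tau>_def)
  moreover have "\<rho> = block_perm a \<sigma> \<tau>"
  proof
    fix i
    consider "i < a" | "a \<le> i" "i < a + b" | "a + b \<le> i"
      by linarith
    then show "\<rho> i = block_perm a \<sigma> \<tau> i"
    proof cases
      case 2
      then have "i - a < b"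
        by simp
      then show ?thesis
        using 2 upper[of i] by (simp add: block_perm_def shift_perm_def \<sigma>_def \<tau>_def)
    next
      case 3
      then show ?thesis
        using permutes_not_in[OF \<rho>, of i] by (simp add: block_perm_def shift_perm_def \<sigma>_def \<tau>_def)
    qed (simp add: block_perm_def shift_perm_def \<sigma>_def)
  qed
  ultimately show ?thesis by (rule that)
qed

definition block_swap :: "nat \<Rightarrow> nat \<Rightarrow> nat \<Rightarrow> nat" where
  "block_swap a b i = (if i < b then a + i else if i < a + b then i - b else i)"

lemma block_swap_permutes: "block_swap a b permutes {..<a + b}"
proof (rule permutes_lessThanI)
  show "inj_on (block_swap a b) {..<a + b}"
    by (rule inj_onI) (auto simp: block_swap_def split: if_splits)
qed (auto simp: block_swap_def)

lemma permute_list_block_swap: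
  "length xs = a + b \<Longrightarrow> permute_list (block_swap a b) xs = drop a xs @ take a xs"
  by (intro nth_equalityI) (auto simp: block_swap_def nth_append)

subsection \<open>Alternation\<close>

definition alternation :: "nat \<Rightarrow> ('a list \<Rightarrow> real) \<Rightarrow> 'a list \<Rightarrow> real" where
  "alternation n F xs = (\<Sum>\<sigma> | \<sigma> permutes {..<n}. of_int (sign \<sigma>) * F (permute_list \<sigma> xs))"

lemma of_int_sign_mult_self [simp]: "of_int (sign p) * of_int (sign p) = (1 :: 'a :: ring_1)"
  by (metis of_int_1 of_int_mult sign_idempotent)

lemma alternation_cong:
  assumes "length xs = n" "\<And>ys. length ys = n \<Longrightarrow> F ys = G ys"
  shows "alternation n F xs = alternation n G xs"
  using assms by (simp add: alternation_def)

lemma alternation_map: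
  assumes "length xs = n"
  shows "alternation n (\<lambda>ys. F (map g ys)) xs = alternation n F (map g xs)"
  unfolding alternation_def using assms by (intro sum.cong) (simp_all add: permute_list_map)

lemma alternation_permute_list:
  assumes "\<pi> permutes {..<n}" "length xs = n"
  shows "alternation n F (permute_list \<pi> xs) = of_int (sign \<pi>) * alternation n F xs"
proof -
  have "alternation n F (permute_list \<pi> xs)
      = (\<Sum>\<sigma> | \<sigma> permutes {..<n}. of_int (sign (\<pi> \<circ> \<sigma>)) * F (permute_list (\<pi> \<circ> \<sigma>) xs)) * of_int (sign \<pi>)"
  proof -
    have "of_int (sign \<sigma>) * F (permute_list \<sigma> (permute_list \<pi> xs))
        = of_int (sign (\<pi> \<circ> \<sigma>)) * F (permute_list (\<pi> \<circ> \<sigma>) xs) * of_int (sign \<pi>)"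
      if "\<sigma> permutes {..<n}" for \<sigma>
      using that assms
      by (simp add: permute_list_compose sign_compose permutation_of_permutes_lessThan mult_ac)
    then show ?thesis
      unfolding alternation_def sum_distrib_right by (intro sum.cong) simp_all
  qed
  also have "\<dots> = of_int (sign \<pi>) * alternation n F xs"
    unfolding alternation_def
    by (subst setum_permutations_compose_left[OF assms(1)]) (simp add: mult.commute)
  finally show ?thesis .
qed

lemma alternation_comp_permute_list:
  assumes "\<pi> permutes {..<n}" "length xs = n"
  shows "alternation n (\<lambda>ys. F (permute_list \<pi> ys)) xs = of_int (sign \<pi>) * alternation n F xs"
proof -
  have "alternation n (\<lambda>ys. F (permute_list \<pi> ys)) xs
      = (\<Sum>\<sigma> | \<sigma> permutes {..<n}. of_int (sign (\<sigma> \<circ> \<pi>)) * F (permute_list (\<sigma> \<circ> \<pi>) xs)) * of_int (sign \<pi>)"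
  proof -
    have "of_int (sign \<sigma>) * F (permute_list \<pi> (permute_list \<sigma> xs))
        = of_int (sign (\<sigma> \<circ> \<pi>)) * F (permute_list (\<sigma> \<circ> \<pi>) xs) * of_int (sign \<pi>)"
      if "\<sigma> permutes {..<n}" for \<sigma>
      using that assms
      by (simp add: permute_list_compose sign_compose permutation_of_permutes_lessThan mult_ac)
    then show ?thesis
      unfolding alternation_def sum_distrib_right by (intro sum.cong) simp_all
  qed
  also have "\<dots> = of_int (sign \<pi>) * alternation n F xs"
    unfolding alternation_def
    by (subst sum_permutations_compose_right[OF assms(1)]) (simp add: mult.commute)
  finally show ?thesis .
qed

lemma alternation_eq_0_if_nth_eq:
  assumes "length xs = n" "i < j" "j < n" "xs ! i = xs ! j"
  shows "alternation n F xs = 0"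
proof -
  let ?t = "Transposition.transpose i j"
  have t: "?t permutes {..<n}"
    using assms by (intro permutes_swap_id) auto
  have "permute_list ?t xs = xs"
    using assms by (intro nth_equalityI) (auto simp: Transposition.transpose_def)
  then have "alternation n F xs = - alternation n F xs"
    using alternation_permute_list[OF t assms(1), of F] assms(2) by (simp add: sign_swap_id)
  then show ?thesis by simp
qed

lemma linear_alternation_update:
  assumes "\<And>ys j. length ys = n \<Longrightarrow> j < n \<Longrightarrow> linear (\<lambda>v. F (ys[j := v]))"
    and "length xs = n" "j < n"
  shows "linear (\<lambda>v. alternation n F (xs[j := v]))"
  unfolding alternation_def
proof (intro linear_compose_sum ballI)
  fix \<sigma> assume "\<sigma> \<in> {\<sigma>. \<sigma> permutes {..<n}}"
  then have \<sigma>: "\<sigma> permutes {..<length xs}"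
    using assms(2) by simp
  have "inv \<sigma> j < n"
    using permutes_in_image[OF permutes_inv[OF \<sigma>]] assms(2,3) by simp
  then have "linear (\<lambda>v. F ((permute_list \<sigma> xs)[inv \<sigma> j := v]))"
    using assms by simp
  then have "linear (\<lambda>v. of_int (sign \<sigma>) * F ((permute_list \<sigma> xs)[inv \<sigma> j := v]))"
    using linear_compose[OF _ linear_times] by (simp add: o_def)
  then show "linear (\<lambda>v. of_int (sign \<sigma>) * F (permute_list \<sigma> (xs[j := v])))"
    using permute_list_list_update[OF \<sigma>] assms(2,3) by simp
qed

lemma alt_form_alternation:
  assumes "\<And>ys j. length ys = n \<Longrightarrow> j < n \<Longrightarrow> linear (\<lambda>v. F (ys[j := v]))"
  shows "alt_form n (\<lambda>xs. if length xs = n then alternation n F xs else 0)"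
  unfolding alt_form_def
proof (intro conjI allI impI)
  show "linear (\<lambda>v. if length (xs[i := v]) = n then alternation n F (xs[i := v]) else 0)"
    if "length xs = n \<and> i < n" for xs i
    using that linear_alternation_update[OF assms, where xs = xs and j = i] by simp
  show "(if length xs = n then alternation n F xs else 0) = 0"
    if "length xs = n \<and> i < j \<and> j < n \<and> xs ! i = xs ! j" for xs i j
    using that alternation_eq_0_if_nth_eq[of xs n i j F] by simp
qed simp

text \<open>Each permuted copy of \<open>F\<close> contributes \<open>sign \<pi> * sign \<pi> = 1\<close> times the alternation of \<open>F\<close>.\<close>

lemma alternation_sum_permuted:
  assumes "finite I" "\<And>i. i \<in> I \<Longrightarrow> \<pi> i permutes {..<n}" "length xs = n"
  shows "alternation n (\<lambda>ys. \<Sum>i\<in>I. of_int (sign (\<pi> i)) * F (permute_list (\<pi> i) ys)) xs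
    = of_nat (card I) * alternation n F xs"
proof -
  have "alternation n (\<lambda>ys. \<Sum>i\<in>I. of_int (sign (\<pi> i)) * F (permute_list (\<pi> i) ys)) xs
      = (\<Sum>i\<in>I. of_int (sign (\<pi> i)) * alternation n (\<lambda>ys. F (permute_list (\<pi> i) ys)) xs)"
    unfolding alternation_def sum_distrib_left
    by (subst sum.swap) (simp add: mult_ac)
  also have "\<dots> = (\<Sum>i\<in>I. alternation n F xs)"
  proof (rule sum.cong)
    fix i assume "i \<in> I"
    then show "of_int (sign (\<pi> i)) * alternation n (\<lambda>ys. F (permute_list (\<pi> i) ys)) xs = alternation n F xs"
      using alternation_comp_permute_list[OF assms(2) assms(3)] by (simp add: mult.assoc [symmetric])
  qed simp
  finally show ?thesis by simp
qed

lemma alternation_take_alternation: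
  assumes "length xs = a + b"
  shows "alternation (a + b) (\<lambda>ys. alternation a K (take a ys) * Z (drop a ys)) xs
    = fact a * alternation (a + b) (\<lambda>ys. K (take a ys) * Z (drop a ys)) xs"
proof -
  let ?P = "{\<sigma>. \<sigma> permutes {..<a}}"
  let ?H = "\<lambda>ys. K (take a ys) * Z (drop a ys)"
  have "alternation a K (take a ys) * Z (drop a ys)
      = (\<Sum>\<sigma>\<in>?P. of_int (sign \<sigma>) * ?H (permute_list \<sigma> ys))"
    if "length ys = a + b" for ys
    unfolding alternation_def sum_distrib_right
  proof (rule sum.cong)
    fix \<sigma> assume "\<sigma> \<in> ?P"
    then have "\<sigma> permutes {..<a}" by simp
    then show "of_int (sign \<sigma>) * K (permute_list \<sigma> (take a ys)) * Z (drop a ys)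
        = of_int (sign \<sigma>) * ?H (permute_list \<sigma> ys)"
      using that by (simp add: take_permute_list drop_permute_list mult.assoc)
  qed simp
  then have "alternation (a + b) (\<lambda>ys. alternation a K (take a ys) * Z (drop a ys)) xs
      = alternation (a + b) (\<lambda>ys. \<Sum>\<sigma>\<in>?P. of_int (sign \<sigma>) * ?H (permute_list \<sigma> ys)) xs"
    by (rule alternation_cong[OF assms])
  also have "\<dots> = of_nat (card ?P) * alternation (a + b) ?H xs"
    using assms by (intro alternation_sum_permuted) (auto intro: permutes_subset finite_permutations)
  finally show ?thesis
    by (simp add: card_permutations)
qed

lemma alternation_drop_alternation:
  assumes "length xs = a + b"
  shows "alternation (a + b) (\<lambda>ys. K (take a ys) * alternation b Z (drop a ys)) xs
    = fact b * alternation (a + b) (\<lambda>ys. K (take a ys) * Z (drop a ys)) xs"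
proof -
  let ?P = "{\<tau>. \<tau> permutes {..<b}}"
  let ?H = "\<lambda>ys. K (take a ys) * Z (drop a ys)"
  have "K (take a ys) * alternation b Z (drop a ys)
      = (\<Sum>\<tau>\<in>?P. of_int (sign (shift_perm a \<tau>)) * ?H (permute_list (shift_perm a \<tau>) ys))"
    if "length ys = a + b" for ys
    unfolding alternation_def sum_distrib_left
  proof (rule sum.cong)
    fix \<tau> assume "\<tau> \<in> ?P"
    then have "\<tau> permutes {..<b}" by simp
    then show "K (take a ys) * (of_int (sign \<tau>) * Z (permute_list \<tau> (drop a ys)))
        = of_int (sign (shift_perm a \<tau>)) * ?H (permute_list (shift_perm a \<tau>) ys)"
      using that
      by (simp add: take_permute_list_shift_perm drop_permute_list_shift_perm sign_shift_perm)
  qed simp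
  then have "alternation (a + b) (\<lambda>ys. K (take a ys) * alternation b Z (drop a ys)) xs
      = alternation (a + b)
          (\<lambda>ys. \<Sum>\<tau>\<in>?P. of_int (sign (shift_perm a \<tau>)) * ?H (permute_list (shift_perm a \<tau>) ys)) xs"
    by (rule alternation_cong[OF assms])
  also have "\<dots> = of_nat (card ?P) * alternation (a + b) ?H xs"
    using assms shift_perm_permutes by (intro alternation_sum_permuted) (auto intro: finite_permutations)
  finally show ?thesis
    by (simp add: card_permutations)
qed

lemma alternation_scale:
  "alternation n (\<lambda>ys. c * F ys) xs = c * alternation n F xs"
  by (simp add: alternation_def sum_distrib_left mult_ac)

lemma alternation_block_eq_0:
  assumes "length xs = a + b" "\<And>us. length us = a \<Longrightarrow> alternation a K us = 0"
  shows "alternation (a + b) (\<lambda>ys. K (take a ys) * Z (drop a ys)) xs = 0"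
proof -
  have "fact a * alternation (a + b) (\<lambda>ys. K (take a ys) * Z (drop a ys)) xs
      = alternation (a + b) (\<lambda>ys. alternation a K (take a ys) * Z (drop a ys)) xs"
    by (rule alternation_take_alternation[OF assms(1), symmetric])
  also have "\<dots> = alternation (a + b) (\<lambda>_. 0) xs"
    using assms by (intro alternation_cong) simp_all
  finally show ?thesis
    by (simp add: alternation_def)
qed

text \<open>Only the permutations that keep the last \<open>b\<close> positions among themselves
  contribute, and these are exactly the block permutations.\<close>

lemma alternation_eq_sum_block_perms:
  assumes len: "length xs = a + b"
    and vanish: "\<And>\<rho> i. \<rho> permutes {..<a + b} \<Longrightarrow> a \<le> i \<Longrightarrow> i < a + b \<Longrightarrow> \<rho> i < a
      \<Longrightarrow> A (drop a (permute_list \<rho> xs)) = 0"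
  shows "alternation (a + b) (\<lambda>ys. E (take a ys) * A (drop a ys)) xs
    = (\<Sum>(\<sigma>, \<tau>) \<in> {\<sigma>. \<sigma> permutes {..<a}} \<times> {\<tau>. \<tau> permutes {..<b}}.
        of_int (sign \<sigma> * sign \<tau>) * E (permute_list \<sigma> (take a xs)) * A (permute_list \<tau> (drop a xs)))"
proof -
  let ?f = "\<lambda>\<rho>. of_int (sign \<rho>) * (E (take a (permute_list \<rho> xs)) * A (drop a (permute_list \<rho> xs)))"
  let ?S = "{\<sigma>. \<sigma> permutes {..<a}} \<times> {\<tau>. \<tau> permutes {..<b}}"
  let ?B = "case_prod (block_perm a) ` ?S"
  have "alternation (a + b) (\<lambda>ys. E (take a ys) * A (drop a ys)) xs = sum ?f ?B"
    unfolding alternation_def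
  proof (rule sum.mono_neutral_right)
    show "finite {\<rho>. \<rho> permutes {..<a + b}}"
      by (simp add: finite_permutations)
    show "?B \<subseteq> {\<rho>. \<rho> permutes {..<a + b}}"
      using block_perm_permutes by auto
    show "\<forall>\<rho> \<in> {\<rho>. \<rho> permutes {..<a + b}} - ?B. ?f \<rho> = 0"
    proof
      fix \<rho> assume \<rho>: "\<rho> \<in> {\<rho>. \<rho> permutes {..<a + b}} - ?B"
      have "\<exists>i. a \<le> i \<and> i < a + b \<and> \<rho> i < a"
      proof (rule ccontr)
        assume "\<nexists>i. a \<le> i \<and> i < a + b \<and> \<rho> i < a"
        then obtain \<sigma> \<tau> where "\<sigma> permutes {..<a}" "\<tau> permutes {..<b}" "\<rho> = block_perm a \<sigma> \<tau>"
          using \<rho> block_perm_cases[of \<rho> a b] by (metis DiffD1 mem_Collect_eq not_le)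
        then show False
          using \<rho> by auto
      qed
      then show "?f \<rho> = 0"
        using vanish \<rho> by auto
    qed
  qed
  also have "\<dots> = sum (?f \<circ> case_prod (block_perm a)) ?S"
    by (rule sum.reindex[OF inj_on_block_perm])
  also have "\<dots> = (\<Sum>(\<sigma>, \<tau>) \<in> ?S.
      of_int (sign \<sigma> * sign \<tau>) * E (permute_list \<sigma> (take a xs)) * A (permute_list \<tau> (drop a xs)))"
  proof (rule sum.cong[OF refl])
    fix p assume "p \<in> ?S"
    then obtain \<sigma> \<tau> where p: "p = (\<sigma>, \<tau>)" and \<sigma>: "\<sigma> permutes {..<a}" and \<tau>: "\<tau> permutes {..<b}"
      by auto
    then show "(?f \<circ> case_prod (block_perm a)) p = (case p of (\<sigma>, \<tau>) \<Rightarrow>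
        of_int (sign \<sigma> * sign \<tau>) * E (permute_list \<sigma> (take a xs)) * A (permute_list \<tau> (drop a xs)))"
      using permute_list_block_perm[OF \<sigma> \<tau> len] by (simp add: sign_block_perm mult.assoc)
  qed
  finally show ?thesis .
qed

lemma alternation_block_eval:
  assumes us: "length us = a" and vs: "length vs = b"
    and vanish: "\<And>\<rho> i. \<rho> permutes {..<a + b} \<Longrightarrow> a \<le> i \<Longrightarrow> i < a + b \<Longrightarrow> \<rho> i < a
      \<Longrightarrow> A (drop a (permute_list \<rho> (us @ vs))) = 0"
    and alt: "\<And>\<tau>. \<tau> permutes {..<b} \<Longrightarrow> A (permute_list \<tau> vs) = of_int (sign \<tau>) * A vs"
  shows "alternation (a + b) (\<lambda>ys. E (take a ys) * A (drop a ys)) (us @ vs)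
    = fact b * A vs * alternation a E us"
proof -
  let ?S = "{\<sigma>. \<sigma> permutes {..<a}} \<times> {\<tau>. \<tau> permutes {..<b}}"
  have "alternation (a + b) (\<lambda>ys. E (take a ys) * A (drop a ys)) (us @ vs)
      = (\<Sum>(\<sigma>, \<tau>) \<in> ?S. of_int (sign \<sigma> * sign \<tau>) * E (permute_list \<sigma> us) * A (permute_list \<tau> vs))"
    using alternation_eq_sum_block_perms[of "us @ vs" a b A E] us vs vanish by simp
  also have "\<dots> = (\<Sum>(\<sigma>, \<tau>) \<in> ?S. of_int (sign \<sigma>) * E (permute_list \<sigma> us) * A vs)"
  proof (rule sum.cong[OF refl], clarify)
    fix \<sigma> \<tau> assume "\<tau> permutes {..<b}"
    then have "of_int (sign \<sigma> * sign \<tau>) * E (permute_list \<sigma> us) * A (permute_list \<tau> vs)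
        = of_int (sign \<sigma>) * E (permute_list \<sigma> us) * A vs * (of_int (sign \<tau>) * of_int (sign \<tau>))"
      by (simp add: alt mult_ac)
    then show "of_int (sign \<sigma> * sign \<tau>) * E (permute_list \<sigma> us) * A (permute_list \<tau> vs)
        = of_int (sign \<sigma>) * E (permute_list \<sigma> us) * A vs"
      by simp
  qed
  also have "\<dots> = (\<Sum>\<sigma> | \<sigma> permutes {..<a}. \<Sum>\<tau> | \<tau> permutes {..<b}.
      of_int (sign \<sigma>) * E (permute_list \<sigma> us) * A vs)"
    by (rule sum.cartesian_product[symmetric])
  also have "\<dots> = fact b * A vs * alternation a E us"
    by (simp add: alternation_def card_permutations sum_distrib_left mult_ac)
  finally show ?thesis .
qed

subsection \<open>Alternating forms\<close>

lemma alt_form_linear: "alt_form k f \<Longrightarrow> length xs = k \<Longrightarrow> i < k \<Longrightarrow> linear (\<lambda>v. f (xs[i := v]))"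
  unfolding alt_form_def by blast

lemma alt_form_eq_0_if_nth_eq:
  "alt_form k f \<Longrightarrow> length xs = k \<Longrightarrow> i < k \<Longrightarrow> j < k \<Longrightarrow> i \<noteq> j \<Longrightarrow> xs ! i = xs ! j \<Longrightarrow> f xs = 0"
  unfolding alt_form_def by (metis linorder_neqE_nat)

lemma alt_form_eq_0_if_nth_zero:
  assumes "alt_form k f" "length xs = k" "i < k" "xs ! i = 0"
  shows "f xs = 0"
  using linear_0[OF alt_form_linear[OF assms(1-3)]] assms(4) by (metis list_update_id)

lemma alt_form_transpose:
  assumes f: "alt_form k f" and "length xs = k" "a < k" "b < k" "a \<noteq> b"
  shows "f (permute_list (Transposition.transpose a b) xs) = - f xs"
proof -
  define g where "g x y = f (xs[a := x, b := y])" for x y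
  have lin_1: "linear (\<lambda>x. g x y)" for y
    unfolding g_def using alt_form_linear[OF f, of "xs[b := y]" a] assms
    by (simp add: list_update_swap)
  have lin_2: "linear (\<lambda>y. g x y)" for x
    unfolding g_def using alt_form_linear[OF f, of "xs[a := x]" b] assms by simp
  have diag: "g x x = 0" for x
    unfolding g_def using alt_form_eq_0_if_nth_eq[OF f, of "xs[a := x, b := x]" a b] assms
    by (simp add: nth_list_update)
  \<comment> \<open>polarisation: \<open>0 = g (x + y) (x + y)\<close> expands to \<open>g x y + g y x\<close>\<close>
  have antisym: "g x y = - g y x" for x y
    using diag[of "x + y"] diag[of x] diag[of y]
      linear_add[OF lin_1, of x y "x + y"] linear_add[OF lin_2, of x x y] linear_add[OF lin_2, of y x y]
    by simp
  have "permute_list (Transposition.transpose a b) xs = xs[a := xs ! b, b := xs ! a]"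
    using assms by (intro nth_equalityI) (auto simp: nth_list_update Transposition.transpose_def)
  then have "f (permute_list (Transposition.transpose a b) xs) = g (xs ! b) (xs ! a)"
    by (simp add: g_def)
  also have "\<dots> = - g (xs ! a) (xs ! b)"
    by (rule antisym)
  also have "g (xs ! a) (xs ! b) = f xs"
    by (simp add: g_def)
  finally show ?thesis .
qed

lemma alt_form_permute_list:
  assumes f: "alt_form k f" and \<sigma>: "\<sigma> permutes {..<k}" and "length xs = k"
  shows "f (permute_list \<sigma> xs) = of_int (sign \<sigma>) * f xs"
  using \<sigma> finite_lessThan assms(3)
proof (induction arbitrary: xs rule: permutes_induct)
  case id
  then show ?case by simp
next
  case (swap a b p)
  let ?t = "Transposition.transpose a b"
  have "f (permute_list (?t \<circ> p) xs) = f (permute_list p (permute_list ?t xs))"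
    using \<open>p permutes {..<k}\<close> swap.prems by (simp add: permute_list_compose)
  also have "\<dots> = - (of_int (sign p) * f xs)"
    using swap alt_form_transpose[OF f] by simp
  also have "\<dots> = of_int (sign (?t \<circ> p)) * f xs"
    using \<open>a \<noteq> b\<close>
    by (simp add: sign_compose[OF permutation_swap_id permutation_of_permutes_lessThan[OF \<open>p permutes {..<k}\<close>]]
        sign_swap_id)
  finally show ?case .
qed

lemma alt_form_eq_0_if_dependent:
  assumes f: "alt_form k f" and xs: "length xs = k" and dep: "dependent (set xs)"
  shows "f xs = 0"
proof -
  obtain x where x: "x \<in> set xs" "x \<in> span (set xs - {x})"
    using dep unfolding real_vector.dependent_def by blast
  obtain j where j: "j < k" "xs ! j = x"
    using x(1) xs by (auto simp: in_set_conv_nth)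
  obtain u where u: "x = (\<Sum>v\<in>set xs - {x}. u v *\<^sub>R v)"
    using x(2) real_vector.span_finite[of "set xs - {x}"] by auto
  have lin: "linear (\<lambda>v. f (xs[j := v]))"
    using alt_form_linear[OF f xs j(1)] .
  have "f xs = f (xs[j := (\<Sum>v\<in>set xs - {x}. u v *\<^sub>R v)])"
    using j u by (metis list_update_id)
  also have "\<dots> = (\<Sum>v\<in>set xs - {x}. f (xs[j := u v *\<^sub>R v]))"
    by (rule linear_sum[OF lin])
  also have "\<dots> = (\<Sum>v\<in>set xs - {x}. u v * f (xs[j := v]))"
    using linear_scale[OF lin] by simp
  also have "\<dots> = 0"
  proof (intro sum.neutral ballI)
    fix v assume v: "v \<in> set xs - {x}"
    then obtain i where "i < k" "xs ! i = v"
      using xs by (auto simp: in_set_conv_nth)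
    moreover have "i \<noteq> j"
      using v j \<open>xs ! i = v\<close> by auto
    ultimately have "f (xs[j := v]) = 0"
      using alt_form_eq_0_if_nth_eq[OF f, of "xs[j := v]" i j] xs j by simp
    then show "u v * f (xs[j := v]) = 0" by simp
  qed
  finally show ?thesis .
qed

lemma card_le_dim_if_independent:
  fixes S :: "'v::real_vector set"
  assumes "fin_dim_space TYPE('v)" "independent S"
  shows "card S \<le> dim (UNIV :: 'v set)"
proof -
  obtain T :: "'v set" where T: "finite T" "span T = UNIV"
    using assms(1) unfolding fin_dim_space_def by blast
  obtain B :: "'v set" where B: "independent B" "UNIV \<subseteq> span B" "card B = dim (UNIV :: 'v set)"
    using real_vector.basis_exists[of UNIV] by blast
  have "finite B"
    using real_vector.independent_span_bound[OF T(1) B(1)] T(2) by simp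
  then show ?thesis
    using real_vector.independent_span_bound[OF \<open>finite B\<close> assms(2)] B(2,3) by auto
qed

lemma alt_form_eq_0_above_dim:
  fixes f :: "'v::real_vector list \<Rightarrow> real"
  assumes "fin_dim_space TYPE('v)" and f: "alt_form k f" and "dim (UNIV :: 'v set) < k"
  shows "f xs = 0"
proof (cases "length xs = k")
  case False
  then show ?thesis
    using f by (simp add: alt_form_def)
next
  case xs: True
  show ?thesis
  proof (cases "distinct xs")
    case False
    then obtain i j where "i < k" "j < k" "i \<noteq> j" "xs ! i = xs ! j"
      using xs by (auto simp: distinct_conv_nth)
    then show ?thesis
      using alt_form_eq_0_if_nth_eq[OF f xs] by blast
  next
    case True
    then have "card (set xs) = k"
      using xs distinct_card by blast
    then have "dependent (set xs)"
      using card_le_dim_if_independent[OF assms(1)] assms(3) by force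
    then show ?thesis
      using alt_form_eq_0_if_dependent[OF f xs] by blast
  qed
qed

subsection \<open>Wedge products\<close>

lemma wedge_eq_alternation:
  assumes "length xs = k + l"
  shows "wedge k l \<alpha> \<beta> xs
    = alternation (k + l) (\<lambda>ys. \<alpha> (take k ys) * \<beta> (drop k ys)) xs / (fact k * fact l)"
proof -
  have "map (\<lambda>i. xs ! \<sigma> i) [0..<k] = take k (permute_list \<sigma> xs)"
    and "map (\<lambda>i. xs ! \<sigma> (k + i)) [0..<l] = drop k (permute_list \<sigma> xs)" for \<sigma>
    using assms by (auto intro: nth_equalityI)
  then show ?thesis
    using assms by (simp add: wedge_def alternation_def atLeast0LessThan mult.assoc)
qed

lemma wedge_one_form_eq_alternation:
  assumes "length xs = Suc k"
  shows "wedge 1 k (one_form \<xi>) \<beta> xs = alternation (Suc k) (\<lambda>ys. \<xi> (hd ys) * \<beta> (tl ys)) xs / fact k"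
proof -
  have "alternation (1 + k) (\<lambda>ys. one_form \<xi> (take 1 ys) * \<beta> (drop 1 ys)) xs
      = alternation (Suc k) (\<lambda>ys. \<xi> (hd ys) * \<beta> (tl ys)) xs"
    unfolding plus_1_eq_Suc using assms
    by (intro alternation_cong) (auto simp: one_form_def length_Suc_conv)
  then show ?thesis
    using assms by (simp add: wedge_eq_alternation)
qed

lemma wedge_one_form_wedge:
  assumes "length xs = Suc (k + l)"
  shows "wedge 1 (k + l) (one_form \<xi>) (wedge k l \<alpha> \<beta>) xs
    = alternation (Suc (k + l)) (\<lambda>ys. \<xi> (hd ys) * \<alpha> (take k (tl ys)) * \<beta> (drop k (tl ys))) xs
      / (fact k * fact l)"
proof -
  let ?G = "\<lambda>zs. \<alpha> (take k zs) * \<beta> (drop k zs)"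
  let ?c = "inverse (fact k * fact l) :: real"
  have len: "length xs = 1 + (k + l)"
    using assms by simp
  have "wedge 1 (k + l) (one_form \<xi>) (wedge k l \<alpha> \<beta>) xs
      = alternation (1 + (k + l)) (\<lambda>ys. one_form \<xi> (take 1 ys) * wedge k l \<alpha> \<beta> (drop 1 ys)) xs
        / fact (k + l)"
    using wedge_eq_alternation[OF len, of "one_form \<xi>" "wedge k l \<alpha> \<beta>"] by simp
  also have "alternation (1 + (k + l)) (\<lambda>ys. one_form \<xi> (take 1 ys) * wedge k l \<alpha> \<beta> (drop 1 ys)) xs
      = alternation (1 + (k + l))
          (\<lambda>ys. ?c * (one_form \<xi> (take 1 ys) * alternation (k + l) ?G (drop 1 ys))) xs"
    using len by (intro alternation_cong) (simp_all add: wedge_eq_alternation divide_inverse mult_ac)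
  also have "\<dots> = ?c * (fact (k + l)
      * alternation (1 + (k + l)) (\<lambda>ys. one_form \<xi> (take 1 ys) * ?G (drop 1 ys)) xs)"
    by (simp only: alternation_scale alternation_drop_alternation[OF len])
  also have "alternation (1 + (k + l)) (\<lambda>ys. one_form \<xi> (take 1 ys) * ?G (drop 1 ys)) xs
      = alternation (Suc (k + l)) (\<lambda>ys. \<xi> (hd ys) * \<alpha> (take k (tl ys)) * \<beta> (drop k (tl ys))) xs"
    unfolding plus_1_eq_Suc using assms
    by (intro alternation_cong) (auto simp: one_form_def take_Suc drop_Suc neq_Nil_conv)
  finally show ?thesis
    by (simp add: divide_inverse)
qed

lemma wedge_commute:
  "wedge k l \<alpha> \<beta> xs = of_int (sign (block_swap k l)) * wedge l k \<beta> \<alpha> xs"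
proof (cases "length xs = k + l")
  case False
  then show ?thesis by (simp add: wedge_def add.commute)
next
  case True
  have "alternation (k + l) (\<lambda>ys. \<alpha> (take k ys) * \<beta> (drop k ys)) xs
      = alternation (k + l) (\<lambda>ys. \<beta> (take l (permute_list (block_swap k l) ys))
          * \<alpha> (drop l (permute_list (block_swap k l) ys))) xs"
    using True by (intro alternation_cong) (simp_all add: permute_list_block_swap)
  also have "\<dots> = of_int (sign (block_swap k l)) * alternation (k + l) (\<lambda>ys. \<beta> (take l ys) * \<alpha> (drop l ys)) xs"
    using True by (rule alternation_comp_permute_list[OF block_swap_permutes])
  finally show ?thesis
    using True by (simp add: wedge_eq_alternation add.commute mult.commute)
qed

lemma wedge_scale_right: "wedge k l \<alpha> (\<lambda>xs. c * \<beta> xs) xs = c * wedge k l \<alpha> \<beta> xs"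
  by (simp add: wedge_def sum_distrib_left mult_ac)

subsection \<open>Pullbacks to a product\<close>

lemma linear_hd_times_tl_update:
  assumes "alt_form n \<theta>" "linear \<alpha>" "length ws = Suc n" "j < Suc n"
  shows "linear (\<lambda>v. \<alpha> (hd (ws[j := v])) * \<theta> (tl (ws[j := v])))"
proof -
  obtain w ws' where ws: "ws = w # ws'" and ws': "length ws' = n"
    using assms(3) by (cases ws) auto
  show ?thesis
  proof (cases j)
    case 0
    then show ?thesis
      using linear_compose[OF assms(2) linear_times[of "\<theta> ws'"]] by (simp add: ws o_def mult.commute)
  next
    case (Suc i)
    then show ?thesis
      using linear_compose[OF alt_form_linear[OF assms(1) ws', of i] linear_times[of "\<alpha> w"]] assms(4)
      by (simp add: ws o_def)
  qed
qed

lemma wedge_one_form_fst_pullbacks_eq_0: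
  fixes \<theta> :: "'w::real_vector list \<Rightarrow> real" and \<zeta> :: "'d::real_vector list \<Rightarrow> real"
  assumes "fin_dim_space TYPE('w)" "volume_form n \<theta>" "linear \<alpha>"
  shows "wedge 1 (n + q) (one_form (\<lambda>z. \<alpha> (fst z)))
    (wedge n q (\<lambda>xs. \<theta> (map fst xs)) (\<lambda>xs. \<zeta> (map snd xs))) = (\<lambda>_. 0)"
proof
  fix xs :: "('w \<times> 'd) list"
  define K where "K ws = \<alpha> (hd ws) * \<theta> (tl ws)" for ws
  have \<theta>: "alt_form n \<theta>" "dim (UNIV :: 'w set) < Suc n"
    using assms(2) by (auto simp: volume_form_def)
  \<comment> \<open>\<open>\<alpha> \<and> \<theta>\<close> is an \<open>(n + 1)\<close>-form on the \<open>n\<close>-dimensional space \<open>W\<close>\<close>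
  have K: "alternation (Suc n) K ws = 0" if "length ws = Suc n" for ws
    using alt_form_eq_0_above_dim[OF assms(1) alt_form_alternation \<theta>(2), of K ws]
      linear_hd_times_tl_update[OF \<theta>(1) assms(3)] that
    by (simp add: K_def)
  show "wedge 1 (n + q) (one_form (\<lambda>z. \<alpha> (fst z)))
    (wedge n q (\<lambda>xs. \<theta> (map fst xs)) (\<lambda>xs. \<zeta> (map snd xs))) xs = 0"
  proof (cases "length xs = Suc n + q")
    case True
    have "alternation (Suc n + q) (\<lambda>ys. \<alpha> (fst (hd ys)) * \<theta> (map fst (take n (tl ys)))
        * \<zeta> (map snd (drop n (tl ys)))) xs
      = alternation (Suc n + q) (\<lambda>ys. K (map fst (take (Suc n) ys)) * \<zeta> (map snd (drop (Suc n) ys))) xs"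
      using True by (intro alternation_cong) (auto simp: K_def length_Suc_conv)
    also have "\<dots> = 0"
      using True K by (intro alternation_block_eq_0) (simp_all add: alternation_map)
    finally show ?thesis
      using True wedge_one_form_wedge[of xs n q "\<lambda>z. \<alpha> (fst z)"] by simp
  qed (simp add: wedge_def)
qed

lemma wedge_one_form_pullbacks_eval:
  fixes \<theta> :: "'w::real_vector list \<Rightarrow> real" and \<zeta> :: "'d::real_vector list \<Rightarrow> real"
  assumes \<theta>: "alt_form n \<theta>" and ds: "length ds = Suc q" and ws: "length ws = n"
  shows "wedge 1 (q + n) (one_form \<xi>) (wedge q n (\<lambda>xs. \<zeta> (map snd xs)) (\<lambda>xs. \<theta> (map fst xs)))
      (map (\<lambda>d. (0, d)) ds @ map (\<lambda>w. (w, 0)) ws)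
    = \<theta> ws * wedge 1 q (one_form (\<lambda>d. \<xi> (0, d))) \<zeta> ds"
proof -
  define us where "us = map (\<lambda>d. (0 :: 'w, d)) ds"
  define vs where "vs = map (\<lambda>w. (w, 0 :: 'd)) ws"
  define A where "A xs = \<theta> (map fst xs)" for xs :: "('w \<times> 'd) list"
  define E where "E xs = \<xi> (hd xs) * \<zeta> (map snd (tl xs))" for xs :: "('w \<times> 'd) list"
  have us: "length us = Suc q" and vs: "length vs = n"
    using ds ws by (simp_all add: us_def vs_def)
  have vanish: "A (drop (Suc q) (permute_list \<rho> (us @ vs))) = 0"
    if "\<rho> permutes {..<Suc q + n}" "Suc q \<le> i" "i < Suc q + n" "\<rho> i < Suc q" for \<rho> i
  proof -
    have "map fst (drop (Suc q) (permute_list \<rho> (us @ vs))) ! (i - Suc q) = 0"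
      using that us vs by (simp add: nth_append us_def)
    then show ?thesis
      unfolding A_def using that us vs by (intro alt_form_eq_0_if_nth_zero[OF \<theta>, of _ "i - Suc q"]) auto
  qed
  have alt: "A (permute_list \<tau> vs) = of_int (sign \<tau>) * A vs" if "\<tau> permutes {..<n}" for \<tau>
    using that vs alt_form_permute_list[OF \<theta> that, of ws] ws
    by (simp add: A_def vs_def permute_list_map comp_def)
  have len: "length (us @ vs) = Suc (q + n)"
    using us vs by simp
  have "wedge 1 (q + n) (one_form \<xi>) (wedge q n (\<lambda>xs. \<zeta> (map snd xs)) A) (us @ vs)
      = alternation (Suc (q + n)) (\<lambda>ys. \<xi> (hd ys) * \<zeta> (map snd (take q (tl ys))) * A (drop q (tl ys)))
          (us @ vs) / (fact q * fact n)"
    by (rule wedge_one_form_wedge[OF len])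
  also have "alternation (Suc (q + n))
      (\<lambda>ys. \<xi> (hd ys) * \<zeta> (map snd (take q (tl ys))) * A (drop q (tl ys))) (us @ vs)
    = alternation (Suc q + n) (\<lambda>ys. E (take (Suc q) ys) * A (drop (Suc q) ys)) (us @ vs)"
    unfolding add_Suc using len by (intro alternation_cong) (auto simp: E_def length_Suc_conv)
  also have "\<dots> = fact n * \<theta> ws * alternation (Suc q) E us"
    using alternation_block_eval[OF us vs vanish alt] by (simp add: A_def vs_def comp_def)
  also have "alternation (Suc q) E us
      = alternation (Suc q) (\<lambda>ys. \<xi> (0, hd ys) * \<zeta> (tl ys)) ds"
  proof -
    have "alternation (Suc q) E us = alternation (Suc q) (\<lambda>ys. E (map (\<lambda>d. (0, d)) ys)) ds"
      unfolding us_def using ds by (rule alternation_map[symmetric])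
    also have "\<dots> = alternation (Suc q) (\<lambda>ys. \<xi> (0, hd ys) * \<zeta> (tl ys)) ds"
      using ds by (intro alternation_cong) (auto simp: E_def length_Suc_conv comp_def)
    finally show ?thesis .
  qed
  also have "\<dots> = fact q * wedge 1 q (one_form (\<lambda>d. \<xi> (0, d))) \<zeta> ds"
    using wedge_one_form_eq_alternation[OF ds] by simp
  finally show ?thesis
    by (simp add: A_def us_def vs_def)
qed

lemma exists_linear_functional_eq_1:
  fixes w :: "'v::real_vector"
  assumes "w \<noteq> 0"
  obtains \<alpha> :: "'v \<Rightarrow> real" where "linear \<alpha>" "\<alpha> w = 1"
proof -
  have "independent {w}"
    using assms by (simp add: real_vector.independent_insert)
  then show ?thesis
    using real_vector.linear_independent_extend[of "{w}" "\<lambda>_. 1"] that by auto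
qed

lemma div_space_pullbacks_subset:
  fixes \<theta> :: "'w::real_vector list \<Rightarrow> real" and \<zeta> :: "'d::real_vector list \<Rightarrow> real"
  assumes "fin_dim_space TYPE('w)" "volume_form n \<theta>"
  shows "div_space (n + q) (wedge n q (\<lambda>xs. \<theta> (map fst xs)) (\<lambda>xs. \<zeta> (map snd xs)))
    \<subseteq> {0} \<times> UNIV"
proof
  fix z :: "'w \<times> 'd"
  assume z: "z \<in> div_space (n + q) (wedge n q (\<lambda>xs. \<theta> (map fst xs)) (\<lambda>xs. \<zeta> (map snd xs)))"
  show "z \<in> {0} \<times> UNIV"
  proof (rule ccontr)
    assume "z \<notin> {0} \<times> UNIV"
    then obtain \<alpha> :: "'w \<Rightarrow> real" where \<alpha>: "linear \<alpha>" "\<alpha> (fst z) = 1"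
      using exists_linear_functional_eq_1[of "fst z"] by (cases z) auto
    then have "linear (\<lambda>z. \<alpha> (fst z))"
      using linear_compose[OF linear_fst \<alpha>(1)] by (simp add: o_def)
    then have "\<alpha> (fst z) = 0"
      using z wedge_one_form_fst_pullbacks_eq_0[OF assms \<alpha>(1)] by (auto simp: div_space_def)
    then show False
      using \<alpha>(2) by simp
  qed
qed

lemma linear_Pair_zero_comp:
  fixes \<xi> :: "'w::real_vector \<times> 'd::real_vector \<Rightarrow> real"
  assumes "linear \<xi>"
  shows "linear (\<lambda>d. \<xi> (0, d))"
proof -
  have "linear (\<lambda>d :: 'd. (0 :: 'w, d))"
    by (rule linearI) simp_all
  then show ?thesis
    using linear_compose[OF _ assms] by (simp add: o_def)
qed

lemma wedge_one_form_Pair_zero_eq_0: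
  fixes \<theta> :: "'w::real_vector list \<Rightarrow> real" and \<zeta> :: "'d::real_vector list \<Rightarrow> real"
  assumes vol: "volume_form n \<theta>"
    and \<xi>: "wedge 1 (n + q) (one_form \<xi>)
      (wedge n q (\<lambda>xs. \<theta> (map fst xs)) (\<lambda>xs. \<zeta> (map snd xs))) = (\<lambda>_. 0)"
  shows "wedge 1 q (one_form (\<lambda>d. \<xi> (0, d))) \<zeta> = (\<lambda>_. 0)"
proof
  fix ds :: "'d list"
  have \<theta>: "alt_form n \<theta>"
    using vol unfolding volume_form_def by blast
  obtain ws where ws: "\<theta> ws \<noteq> 0"
    using vol by (auto simp: volume_form_def fun_eq_iff)
  then have "length ws = n"
    using \<theta> by (auto simp: alt_form_def)
  have swap: "wedge n q (\<lambda>xs. \<theta> (map fst xs)) (\<lambda>xs. \<zeta> (map snd xs))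
      = (\<lambda>xs. of_int (sign (block_swap n q))
          * wedge q n (\<lambda>xs. \<zeta> (map snd xs)) (\<lambda>xs. \<theta> (map fst xs)) xs)"
    by (rule ext) (rule wedge_commute)
  show "wedge 1 q (one_form (\<lambda>d. \<xi> (0, d))) \<zeta> ds = 0"
  proof (cases "length ds = Suc q")
    case True
    let ?ys = "map (\<lambda>d. (0, d)) ds @ map (\<lambda>w. (w, 0)) ws"
    have "0 = wedge 1 (n + q) (one_form \<xi>)
        (wedge n q (\<lambda>xs. \<theta> (map fst xs)) (\<lambda>xs. \<zeta> (map snd xs))) ?ys"
      using \<xi> by simp
    also have "\<dots> = of_int (sign (block_swap n q)) * wedge 1 (q + n) (one_form \<xi>)
        (wedge q n (\<lambda>xs. \<zeta> (map snd xs)) (\<lambda>xs. \<theta> (map fst xs))) ?ys"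
      by (simp only: swap wedge_scale_right add.commute)
    also have "\<dots> = of_int (sign (block_swap n q)) * \<theta> ws * wedge 1 q (one_form (\<lambda>d. \<xi> (0, d))) \<zeta> ds"
      using wedge_one_form_pullbacks_eval[OF \<theta> True \<open>length ws = n\<close>] by (simp add: mult.assoc)
    finally show ?thesis
      using ws by (simp add: sign_def split: if_splits)
  qed (simp add: wedge_def)
qed

lemma zero_times_div_space_subset_div_space_pullbacks:
  fixes \<theta> :: "'w::real_vector list \<Rightarrow> real" and \<zeta> :: "'d::real_vector list \<Rightarrow> real"
  assumes "volume_form n \<theta>"
  shows "{0} \<times> div_space q \<zeta>
    \<subseteq> div_space (n + q) (wedge n q (\<lambda>xs. \<theta> (map fst xs)) (\<lambda>xs. \<zeta> (map snd xs)))"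
proof
  fix z :: "'w \<times> 'd"
  assume "z \<in> {0} \<times> div_space q \<zeta>"
  then obtain d where z: "z = (0, d)" and d: "d \<in> div_space q \<zeta>"
    by auto
  show "z \<in> div_space (n + q) (wedge n q (\<lambda>xs. \<theta> (map fst xs)) (\<lambda>xs. \<zeta> (map snd xs)))"
    unfolding div_space_def
  proof (intro CollectI allI impI)
    fix \<xi> :: "'w \<times> 'd \<Rightarrow> real"
    assume "linear \<xi> \<and> wedge 1 (n + q) (one_form \<xi>)
      (wedge n q (\<lambda>xs. \<theta> (map fst xs)) (\<lambda>xs. \<zeta> (map snd xs))) = (\<lambda>_. 0)"
    then have "linear (\<lambda>d. \<xi> (0, d))" "wedge 1 q (one_form (\<lambda>d. \<xi> (0, d))) \<zeta> = (\<lambda>_. 0)"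
      using linear_Pair_zero_comp wedge_one_form_Pair_zero_eq_0[OF assms] by auto
    then show "\<xi> z = 0"
      using d z by (auto simp: div_space_def)
  qed
qed

theorem lemma3p6:
  fixes \<theta>0 :: "'w::real_vector list \<Rightarrow> real"
    and \<zeta>0 :: "'d::real_vector list \<Rightarrow> real"
    and n q :: nat
  assumes "fin_dim_space TYPE('w)"
    and "fin_dim_space TYPE('d)"
    and "volume_form n \<theta>0"
    and "indivisible q \<zeta>0"
  shows "div_space (n + q)
           (wedge n q (\<lambda>xs. \<theta>0 (map fst xs)) (\<lambda>xs. \<zeta>0 (map snd xs)))
         = ({0} \<times> UNIV :: ('w \<times> 'd) set)"
proof
  show "div_space (n + q) (wedge n q (\<lambda>xs. \<theta>0 (map fst xs)) (\<lambda>xs. \<zeta>0 (map snd xs)))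
      \<subseteq> {0} \<times> UNIV"
    using div_space_pullbacks_subset[OF assms(1,3)] .
  show "{0} \<times> UNIV
      \<subseteq> div_space (n + q) (wedge n q (\<lambda>xs. \<theta>0 (map fst xs)) (\<lambda>xs. \<zeta>0 (map snd xs)))"
    using zero_times_div_space_subset_div_space_pullbacks[OF assms(3), of q \<zeta>0] assms(4)
    by (simp add: indivisible_def)
qed

end
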